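(* Let $c>0$, $f_s>0$, let $M,N,K\ge1$ be integers, set $T_{\max}=(N-1)/f_s$, and let $\bm{r}^{\mathrm{mic}}_1,\dots,\bm{r}^{\mathrm{mic}}_M\in\mathbb{R}^3$ with $E_M=\{\bm{r}^{\mathrm{mic}}_m\}$. Let $\kappa:\mathbb{R}\to\mathbb{R}$ be continuous with $\kappa(0)>0$ and $\lim_{|t|\to+\infty}\kappa(t)=0$, and assume $$\forall \tau\in\Big[0,\frac{N-1}{f_s}\Big],\qquad \sum_{n=0}^{N-1}\kappa(n/f_s-\tau)>0.$$ Then $\Gamma^K$ is amplitude lower-bounded, i.e. there is $C>0$ with $\|\Gamma^K(\bm{a},\bm{r})\|_2\ge C\sum_{k=1}^K a_k$ for all $(\bm{a},\bm{r})\in\mathbb{R}_+^K\times\mathscr{C}^K$.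
   Context: $\mathbb{R}_+=[0,+\infty)$, $\|\cdot\|_2$ is the Euclidean norm. For $\bm{r}\in\mathbb{R}^3\setminus E_M$, $\gamma(\bm{r})\in\mathbb{R}^{MN}$ has components $\gamma_{m,n}(\bm{r})=\dfrac{\kappa\big(n/f_s-\|\bm{r}-\bm{r}^{\mathrm{mic}}_m\|_2/c\big)}{4\pi\|\bm{r}-\bm{r}^{\mathrm{mic}}_m\|_2}$, $1\le m\le M$, $0\le n\le N-1$. $\mathscr{C}=\bigcap_{m=1}^M\overline{B(\bm{r}^{\mathrm{mic}}_m,cT_{\max})}\setminus E_M$. $\Gamma^K(\bm{a},\bm{r})=\sum_{k=1}^K a_k\gamma(\bm{r}_k)$ for $\bm{a}\in\mathbb{R}_+^K$, $\bm{r}=(\bm{r}_1,\dots,\bm{r}_K)\in\mathscr{C}^K$. *)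

theory Defs
  imports "HOL-Analysis.Analysis"
begin

text \<open>Component gamma_{m,n}(r) of the vector gamma(r) in R^{MN}.
  Microphones are indexed m = 1..M, time samples n = 0..N-1.\<close>
definition gamma_comp ::
  "(real \<Rightarrow> real) \<Rightarrow> real \<Rightarrow> real \<Rightarrow> (nat \<Rightarrow> real^3) \<Rightarrow> real^3 \<Rightarrow> nat \<Rightarrow> nat \<Rightarrow> real" where
  "gamma_comp \<kappa> c fs rmic r m n =
     \<kappa> (real n / fs - norm (r - rmic m) / c) / (4 * pi * norm (r - rmic m))"

definition GammaK_comp ::
  "(real \<Rightarrow> real) \<Rightarrow> real \<Rightarrow> real \<Rightarrow> (nat \<Rightarrow> real^3) \<Rightarrow> nat \<Rightarrow> (nat \<Rightarrow> real) \<Rightarrow> (nat \<Rightarrow> real^3) \<Rightarrow> nat \<Rightarrow> nat \<Rightarrow> real" where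
  "GammaK_comp \<kappa> c fs rmic K a r m n = (\<Sum>k\<in>{1..K}. a k * gamma_comp \<kappa> c fs rmic (r k) m n)"

definition normMN :: "nat \<Rightarrow> nat \<Rightarrow> (nat \<Rightarrow> nat \<Rightarrow> real) \<Rightarrow> real" where
  "normMN M N v = sqrt (\<Sum>m\<in>{1..M}. \<Sum>n\<in>{0..<N}. (v m n)^2)"

definition micset :: "nat \<Rightarrow> (nat \<Rightarrow> real^3) \<Rightarrow> (real^3) set" where
  "micset M rmic = rmic ` {1..M}"

text \<open>The admissible source region: intersection of closed balls of radius c T_max
  around the microphones, minus the microphone positions.\<close>
definition admissible :: "nat \<Rightarrow> (nat \<Rightarrow> real^3) \<Rightarrow> real \<Rightarrow> (real^3) set" where
  "admissible M rmic R = (\<Inter>m\<in>{1..M}. cball (rmic m) R) - micset M rmic"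

end

theory Submission
  imports Defs
begin

text \<open>Fix one microphone m. Summing gamma(r) over the time samples at m gives
  S(d/c) / (4 pi d), where d = |r - r_m| and S(tau) = sum_n kappa(n/f_s - tau).
  For admissible r we have 0 < d <= c T_max, so tau = d/c ranges over [0, T_max], where the
  continuous function S is bounded below by a positive constant mu; hence the sum is at least
  mu / (4 pi (c T_max + 1)); the + 1 keeps the constant positive when N = 1, where T_max = 0
  and no admissible point exists. As the amplitudes are nonnegative, the samples of Gamma^K at m sum
  to at least that constant times sum_k a_k, and the sum of N samples is at most N times the norm.\<close>

lemma continuous_on_compact_pos_lower_bound:
  fixes f :: "'a::topological_space \<Rightarrow> real"
  assumes "compact S" "continuous_on S f" "\<And>x. x \<in> S \<Longrightarrow> f x > 0"
  shows "\<exists>\<mu>>0. \<forall>x\<in>S. \<mu> \<le> f x"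
proof (cases "S = {}")
  case False
  then obtain x0 where "x0 \<in> S" "\<forall>x\<in>S. f x0 \<le> f x"
    using continuous_attains_inf[OF assms(1) _ assms(2)] by blast
  then show ?thesis using assms(3) by blast
qed (auto intro: exI[of _ 1])

lemma abs_le_normMN:
  assumes "m \<in> {1..M}" "n < N"
  shows "\<bar>v m n\<bar> \<le> normMN M N v"
proof -
  have "(v m n)^2 \<le> (\<Sum>n\<in>{0..<N}. (v m n)^2)"
    using assms by (intro member_le_sum) auto
  also have "\<dots> \<le> (\<Sum>m\<in>{1..M}. \<Sum>n\<in>{0..<N}. (v m n)^2)"
    using assms by (intro member_le_sum[where f="\<lambda>m. \<Sum>n\<in>{0..<N}. (v m n)^2"]) (auto intro: sum_nonneg)
  finally show ?thesis
    unfolding normMN_def by (metis real_sqrt_abs real_sqrt_le_mono)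
qed

lemma sum_le_normMN:
  assumes "m \<in> {1..M}"
  shows "(\<Sum>n\<in>{0..<N}. v m n) \<le> real N * normMN M N v"
proof -
  have "(\<Sum>n\<in>{0..<N}. v m n) \<le> (\<Sum>n\<in>{0..<N}. normMN M N v)"
    using abs_le_normMN[OF assms] by (intro sum_mono) (meson abs_ge_self atLeastLessThan_iff order_trans)
  then show ?thesis by simp
qed

lemma admissible_norm_diff_mic:
  assumes "x \<in> admissible M rmic R" "m \<in> {1..M}"
  shows "0 < norm (x - rmic m)" "norm (x - rmic m) \<le> R"
  using assms by (auto simp: admissible_def micset_def dist_norm norm_minus_commute)

lemma sum_gamma_comp:
  "(\<Sum>n\<in>{0..<N}. gamma_comp \<kappa> c fs rmic x m n)
     = (\<Sum>n\<in>{0..<N}. \<kappa> (real n / fs - norm (x - rmic m) / c)) / (4 * pi * norm (x - rmic m))"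
  unfolding gamma_comp_def by (simp add: sum_divide_distrib)

lemma sum_GammaK_comp:
  "(\<Sum>n\<in>{0..<N}. GammaK_comp \<kappa> c fs rmic K a r m n)
     = (\<Sum>k\<in>{1..K}. a k * (\<Sum>n\<in>{0..<N}. gamma_comp \<kappa> c fs rmic (r k) m n))"
  unfolding GammaK_comp_def sum_distrib_left by (rule sum.swap)

lemma sum_gamma_comp_lower_bound:
  assumes "c > 0" "T \<ge> 0" "m \<in> {1..M}" "continuous_on UNIV \<kappa>"
    and pos: "\<forall>\<tau>\<in>{0..T}. (\<Sum>n\<in>{0..<N}. \<kappa> (real n / fs - \<tau>)) > 0"
  shows "\<exists>B>0. \<forall>x\<in>admissible M rmic (c * T). B \<le> (\<Sum>n\<in>{0..<N}. gamma_comp \<kappa> c fs rmic x m n)"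
proof -
  define S where "S \<tau> = (\<Sum>n\<in>{0..<N}. \<kappa> (real n / fs - \<tau>))" for \<tau>
  have "continuous_on {0..T} S"
    unfolding S_def by (intro continuous_intros continuous_on_compose2[OF assms(4)]) auto
  then obtain \<mu> where \<mu>: "\<mu> > 0" "\<And>\<tau>. \<tau> \<in> {0..T} \<Longrightarrow> \<mu> \<le> S \<tau>"
    using continuous_on_compact_pos_lower_bound[of "{0..T}" S] pos unfolding S_def by auto
  have "\<mu> / (4 * pi * (c * T + 1)) \<le> (\<Sum>n\<in>{0..<N}. gamma_comp \<kappa> c fs rmic x m n)"
    if "x \<in> admissible M rmic (c * T)" for x
  proof -
    define d where "d = norm (x - rmic m)"
    have d: "0 < d" "d \<le> c * T"
      using admissible_norm_diff_mic[OF that assms(3)] unfolding d_def by auto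
    then have "\<mu> \<le> S (d / c)"
      using assms(1) by (intro \<mu>(2)) (auto simp: field_simps)
    then have "\<mu> / (4 * pi * (c * T + 1)) \<le> S (d / c) / (4 * pi * d)"
      using d \<mu>(1) by (intro frac_le) auto
    then show ?thesis
      unfolding sum_gamma_comp S_def d_def .
  qed
  moreover have "\<mu> / (4 * pi * (c * T + 1)) > 0"
    using \<mu>(1) assms(1,2) by (simp add: add_nonneg_pos)
  ultimately show ?thesis by blast
qed

lemma sum_GammaK_comp_lower_bound:
  assumes "\<forall>x\<in>A. B \<le> (\<Sum>n\<in>{0..<N}. gamma_comp \<kappa> c fs rmic x m n)"
    and "\<forall>k\<in>{1..K}. a k \<ge> 0" "\<forall>k\<in>{1..K}. r k \<in> A"
  shows "B * (\<Sum>k\<in>{1..K}. a k) \<le> (\<Sum>n\<in>{0..<N}. GammaK_comp \<kappa> c fs rmic K a r m n)"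
proof -
  have "B * (\<Sum>k\<in>{1..K}. a k) = (\<Sum>k\<in>{1..K}. a k * B)"
    by (simp add: sum_distrib_left mult.commute)
  also have "\<dots> \<le> (\<Sum>k\<in>{1..K}. a k * (\<Sum>n\<in>{0..<N}. gamma_comp \<kappa> c fs rmic (r k) m n))"
    using assms by (intro sum_mono mult_left_mono) auto
  finally show ?thesis
    unfolding sum_GammaK_comp .
qed

theorem proposition2:
  fixes c fs :: real and M N K :: nat and rmic :: "nat \<Rightarrow> real^3" and \<kappa> :: "real \<Rightarrow> real"
  assumes "c > 0" and "fs > 0" and "M \<ge> 1" and "N \<ge> 1" and "K \<ge> 1"
    and "continuous_on UNIV \<kappa>" and "\<kappa> 0 > 0"
    and "(\<kappa> \<longlongrightarrow> 0) at_infinity"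
    and "\<forall>\<tau>\<in>{0..(real N - 1) / fs}. (\<Sum>n\<in>{0..<N}. \<kappa> (real n / fs - \<tau>)) > 0"
  shows "\<exists>C>0. \<forall>a r. (\<forall>k\<in>{1..K}. a k \<ge> 0) \<and>
            (\<forall>k\<in>{1..K}. r k \<in> admissible M rmic (c * ((real N - 1) / fs))) \<longrightarrow>
            normMN M N (GammaK_comp \<kappa> c fs rmic K a r) \<ge> C * (\<Sum>k\<in>{1..K}. a k)"
proof -
  have mic: "1 \<in> {1..M}" using assms(3) by simp
  obtain B where B: "B > 0"
    "\<forall>x\<in>admissible M rmic (c * ((real N - 1) / fs)). B \<le> (\<Sum>n\<in>{0..<N}. gamma_comp \<kappa> c fs rmic x 1 n)"
    using sum_gamma_comp_lower_bound[OF assms(1) _ mic assms(6,9)] assms(2,4) by auto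
  have "B / real N * (\<Sum>k\<in>{1..K}. a k) \<le> normMN M N (GammaK_comp \<kappa> c fs rmic K a r)"
    if "\<forall>k\<in>{1..K}. a k \<ge> 0" "\<forall>k\<in>{1..K}. r k \<in> admissible M rmic (c * ((real N - 1) / fs))"
    for a r
  proof -
    have "B * (\<Sum>k\<in>{1..K}. a k) \<le> real N * normMN M N (GammaK_comp \<kappa> c fs rmic K a r)"
      using sum_GammaK_comp_lower_bound[OF B(2) that] sum_le_normMN[OF mic] by (rule order_trans)
    then show ?thesis
      using assms(4) by (simp add: divide_le_eq mult.commute)
  qed
  moreover have "B / real N > 0" using B(1) assms(4) by simp
  ultimately show ?thesis by blast
qed

end
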